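(* Let $\mathcal E=\mathbb R^{d_\eta}$, $\mathcal B=\mathbb R^{d_b}$, $\mathcal I=\mathbb R^{d_\mu}$ and let $\Pi\in\mathbb R^{d\times d}$, $d=d_\eta+d_b+d_\mu$, be a symmetric positive-definite matrix, written in block form with respect to the partition $x=(\eta,b,\mu)\in\mathcal E\times\mathcal B\times\mathcal I$ as $$\Pi=\begin{bmatrix}\Pi_{\eta}&\Pi_{\eta b}&\Pi_{\eta\mu}\\ \Pi_{b\eta}&\Pi_b&\Pi_{b\mu}\\ \Pi_{\mu\eta}&\Pi_{\mu b}&\Pi_\mu\end{bmatrix},$$ and assume the Markov blanket condition $\Pi_{\eta\mu}=\Pi_{\mu\eta}^\top=0$. Let $\Sigma:=\Pi^{-1}$ with corresponding blocks $\Sigma_{\eta b},\Sigma_b,\Sigma_{\mu b}$, and define the linear maps $\boldsymbol\eta:\mathcal B\to\mathcal E$, $\boldsymbol\eta(b)=\Sigma_{\eta b}\Sigma_b^{-1}b$ and $\boldsymbol\mu:\mathcal B\to\mathcal I$, $\boldsymbol\mu(b)=\Sigma_{\mu b}\Sigma_b^{-1}b$. Then the following are equivalent: (i) there exists a function $\sigma:\operatorname{Im}\boldsymbol\mu\to\operatorname{Im}\boldsymbol\eta$ such that $\sigma(\boldsymbol\mu(b))=\boldsymbol\eta(b)$ for every $b\in\mathcal B$; (ii) for all $b_1,b_2\in\mathcal B$, $\boldsymbol\mu(b_1)=\boldsymbol\mu(b_2)$ implies $\boldsymbol\eta(b_1)=\boldsymbol\eta(b_2)$; (iii) $\ker\Sigma_{\mu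 b}\subset\ker\Sigma_{\eta b}$; (iv) $\ker\Pi_{\mu b}\subset\ker\Pi_{\eta b}$.
   Context: Here $\Pi$ is the precision matrix of a Gaussian density $p(x)=\mathcal N(x;0,\Pi^{-1})$ on $\mathbb R^d$; the condition $\Pi_{\eta\mu}=0$ is equivalent to conditional independence of $\eta$ and $\mu$ given $b$, and $\boldsymbol\eta(b)=\mathbb E[\eta\mid b]$, $\boldsymbol\mu(b)=\mathbb E[\mu\mid b]$ are the conditional expectations under $p$. Blocks $\Sigma_{\eta b},\Sigma_{\mu b},\Sigma_b$ denote the corresponding submatrices of $\Sigma=\Pi^{-1}$ (not the inverses of blocks of $\Pi$); $\Sigma_b$ is invertible as a principal submatrix of a positive-definite matrix. $\ker$ and $\operatorname{Im}$ denote kernel and image. *)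

theory Defs
  imports "HOL-Analysis.Analysis"
begin

text \<open>Coordinates of R^d are indexed by the sum type 'e + ('b + 'm), i.e. x = (eta, b, mu)
  with eta in R^d_eta (index type 'e), b in R^d_b (index type 'b), mu in R^d_mu (index type 'm).\<close>

definition sym_pos_def_mat :: "real^'n^'n \<Rightarrow> bool" where
  "sym_pos_def_mat A \<longleftrightarrow> transpose A = A \<and> (\<forall>x. x \<noteq> 0 \<longrightarrow> x \<bullet> (A *v x) > 0)"

definition blk_eb :: "real^('e::finite + 'b::finite + 'm::finite)^('e + 'b + 'm) \<Rightarrow> real^'b^'e" where
  "blk_eb M = (\<chi> i j. M $ Inl i $ Inr (Inl j))"
definition blk_mb :: "real^('e::finite + 'b::finite + 'm::finite)^('e + 'b + 'm) \<Rightarrow> real^'b^'m" where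
  "blk_mb M = (\<chi> i j. M $ Inr (Inr i) $ Inr (Inl j))"
definition blk_bb :: "real^('e::finite + 'b::finite + 'm::finite)^('e + 'b + 'm) \<Rightarrow> real^'b^'b" where
  "blk_bb M = (\<chi> i j. M $ Inr (Inl i) $ Inr (Inl j))"
definition blk_em :: "real^('e::finite + 'b::finite + 'm::finite)^('e + 'b + 'm) \<Rightarrow> real^'m^'e" where
  "blk_em M = (\<chi> i j. M $ Inl i $ Inr (Inr j))"
definition blk_me :: "real^('e::finite + 'b::finite + 'm::finite)^('e + 'b + 'm) \<Rightarrow> real^'e^'m" where
  "blk_me M = (\<chi> i j. M $ Inr (Inr i) $ Inl j)"

definition eta_map :: "real^('e::finite + 'b::finite + 'm::finite)^('e + 'b + 'm) \<Rightarrow> real^'b \<Rightarrow> real^'e" where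
  "eta_map P b = (blk_eb (matrix_inv P) ** matrix_inv (blk_bb (matrix_inv P))) *v b"
definition mu_map :: "real^('e::finite + 'b::finite + 'm::finite)^('e + 'b + 'm) \<Rightarrow> real^'b \<Rightarrow> real^'m" where
  "mu_map P b = (blk_mb (matrix_inv P) ** matrix_inv (blk_bb (matrix_inv P))) *v b"

end

theory Submission imports Defs begin

text \<open>The equivalence of (i) and (ii) is just the factorisation of \<open>\<eta>\<close> through \<open>\<mu>\<close>.
  Since \<open>\<mu> = \<Sigma>\<^sub>\<mu>\<^sub>b \<Sigma>\<^sub>b\<inverse>\<close> and \<open>\<eta> = \<Sigma>\<^sub>\<eta>\<^sub>b \<Sigma>\<^sub>b\<inverse>\<close> are linear, (ii) says
  \<open>ker \<mu> \<subseteq> ker \<eta>\<close>, which is (iii) because \<open>\<Sigma>\<^sub>b\<inverse>\<close> is onto. For (iv), read off the blocks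
  \<open>(\<eta>, b)\<close> and \<open>(\<mu>, b)\<close> of \<open>\<Pi> \<Sigma> = 1\<close>: since \<open>\<Pi>\<^sub>\<eta>\<^sub>\<mu> = 0\<close> they give
  \<open>\<Pi>\<^sub>\<eta> \<Sigma>\<^sub>\<eta>\<^sub>b = - \<Pi>\<^sub>\<eta>\<^sub>b \<Sigma>\<^sub>b\<close> and \<open>\<Pi>\<^sub>\<mu> \<Sigma>\<^sub>\<mu>\<^sub>b = - \<Pi>\<^sub>\<mu>\<^sub>b \<Sigma>\<^sub>b\<close>. The diagonal blocks
  \<open>\<Pi>\<^sub>\<eta>\<close>, \<open>\<Pi>\<^sub>\<mu>\<close> and \<open>\<Sigma>\<^sub>b\<close> are invertible as principal submatrices of positive definite
  matrices, hence \<open>ker \<Sigma>\<^sub>\<eta>\<^sub>b = \<Sigma>\<^sub>b\<inverse> ker \<Pi>\<^sub>\<eta>\<^sub>b\<close> and \<open>ker \<Sigma>\<^sub>\<mu>\<^sub>b = \<Sigma>\<^sub>b\<inverse> ker \<Pi>\<^sub>\<mu>\<^sub>b\<close>.\<close>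

definition positive_definite :: "real^'n^'n \<Rightarrow> bool" where
  "positive_definite A \<longleftrightarrow> (\<forall>x. x \<noteq> 0 \<longrightarrow> 0 < x \<bullet> (A *v x))"

definition submatrix :: "'a^'n^'m \<Rightarrow> ('k \<Rightarrow> 'm) \<Rightarrow> ('l \<Rightarrow> 'n) \<Rightarrow> 'a^'l^'k" where
  "submatrix M R C = (\<chi> i j. M $ R i $ C j)"

lemma blk_submatrix:
  "blk_eb M = submatrix M Inl (Inr \<circ> Inl)"
  "blk_mb M = submatrix M (Inr \<circ> Inr) (Inr \<circ> Inl)"
  "blk_bb M = submatrix M (Inr \<circ> Inl) (Inr \<circ> Inl)"
  "blk_em M = submatrix M Inl (Inr \<circ> Inr)"
  "blk_me M = submatrix M (Inr \<circ> Inr) Inl"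
  by (simp_all add: submatrix_def blk_eb_def blk_mb_def blk_bb_def blk_em_def blk_me_def)

lemma submatrix_mat_1_disjoint:
  assumes "range R \<inter> range C = {}"
  shows "submatrix (mat 1) R C = 0"
  using assms by (auto simp: submatrix_def mat_def vec_eq_iff)

lemma submatrix_matrix_mult_blocks:
  fixes A :: "'a::semiring_1^('e::finite + 'b::finite + 'm::finite)^'r"
  shows "submatrix (A ** B) R C =
      submatrix A R Inl ** submatrix B Inl C
    + submatrix A R (Inr \<circ> Inl) ** submatrix B (Inr \<circ> Inl) C
    + submatrix A R (Inr \<circ> Inr) ** submatrix B (Inr \<circ> Inr) C"
proof -
  have split: "(\<Sum>k\<in>UNIV. f k) = (\<Sum>i\<in>UNIV. f (Inl i)) + (\<Sum>j\<in>UNIV. f (Inr (Inl j)))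
      + (\<Sum>l\<in>UNIV. f (Inr (Inr l)))" for f :: "'e + 'b + 'm \<Rightarrow> 'a"
    using sum.Plus[of UNIV UNIV f] sum.Plus[of UNIV UNIV "f \<circ> Inr"]
    by (simp add: UNIV_Plus_UNIV comp_def add.assoc)
  show ?thesis
    by (simp add: vec_eq_iff submatrix_def matrix_matrix_mult_def split)
qed

lemma matrix_inv_inverse:
  fixes A :: "'a::field^'n^'n"
  assumes "invertible A"
  shows "A ** matrix_inv A = mat 1" and "matrix_inv A ** A = mat 1"
  using someI_ex[OF assms[unfolded invertible_def]] by (simp_all add: matrix_inv_def)

lemma invertible_matrix_inv:
  fixes A :: "'a::field^'n^'n"
  assumes "invertible A"
  shows "invertible (matrix_inv A)"
  using matrix_inv_inverse[OF assms] invertible_def by blast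

lemma sym_pos_def_mat_positive_definite:
  "sym_pos_def_mat A \<Longrightarrow> positive_definite A"
  by (simp add: sym_pos_def_mat_def positive_definite_def)

lemma positive_definite_invertible:
  assumes "positive_definite A"
  shows "invertible A"
proof -
  have "A *v x = 0 \<Longrightarrow> x = 0" for x
    using assms by (metis positive_definite_def inner_zero_right less_irrefl)
  then show ?thesis
    using matrix_left_invertible_ker invertible_left_inverse by blast
qed

lemma positive_definite_matrix_inv:
  fixes A :: "real^'n^'n"
  assumes "positive_definite A"
  shows "positive_definite (matrix_inv A)"
  unfolding positive_definite_def
proof (intro allI impI)
  fix z :: "real^'n"
  assume "z \<noteq> 0"
  define w where "w = matrix_inv A *v z"
  have z: "z = A *v w"
    using matrix_inv_inverse(1)[OF positive_definite_invertible[OF assms]]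
    by (simp add: w_def matrix_vector_mul_assoc)
  with \<open>z \<noteq> 0\<close> have "w \<noteq> 0"
    by auto
  then have "0 < w \<bullet> (A *v w)"
    using assms by (simp add: positive_definite_def)
  then show "0 < z \<bullet> (matrix_inv A *v z)"
    by (simp add: z[symmetric] w_def[symmetric] inner_commute)
qed

text \<open>Extending \<open>x\<close> by zeros outside \<open>range R\<close> gives a vector \<open>z\<close> with
  \<open>z \<bullet> (A *v z) = x \<bullet> (submatrix A R R *v x)\<close>.\<close>
lemma positive_definite_submatrix:
  fixes A :: "real^'n^'n" and R :: "'k::finite \<Rightarrow> 'n"
  assumes "positive_definite A" and "inj R"
  shows "positive_definite (submatrix A R R)"
  unfolding positive_definite_def
proof (intro allI impI)
  fix x :: "real^'k"
  assume "x \<noteq> 0"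
  define z :: "real^'n" where "z = (\<chi> k. if k \<in> range R then x $ inv R k else 0)"
  have z_R: "z $ R i = x $ i" for i
    using \<open>inj R\<close> by (simp add: z_def)
  have sum_z: "(\<Sum>l\<in>UNIV. g l * z $ l) = (\<Sum>i\<in>UNIV. g (R i) * x $ i)" for g
  proof -
    have "(\<Sum>l\<in>UNIV. g l * z $ l) = (\<Sum>l\<in>range R. g l * z $ l)"
      by (rule sum.mono_neutral_right) (auto simp: z_def)
    also have "\<dots> = (\<Sum>i\<in>UNIV. g (R i) * x $ i)"
      using \<open>inj R\<close> by (simp add: sum.reindex z_R)
    finally show ?thesis .
  qed
  have "z \<noteq> 0"
    using \<open>x \<noteq> 0\<close> z_R by (metis vec_eq_iff zero_index)
  have Az_R: "(A *v z) $ R i = (submatrix A R R *v x) $ i" for i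
    by (simp add: matrix_vector_mult_def submatrix_def sum_z)
  have "z \<bullet> (A *v z) = (\<Sum>l\<in>UNIV. (A *v z) $ l * z $ l)"
    by (simp add: inner_vec_def mult.commute)
  also have "\<dots> = (\<Sum>i\<in>UNIV. (A *v z) $ R i * x $ i)"
    by (rule sum_z)
  also have "\<dots> = x \<bullet> (submatrix A R R *v x)"
    by (simp add: Az_R inner_vec_def mult.commute)
  finally show "0 < x \<bullet> (submatrix A R R *v x)"
    using assms(1) \<open>z \<noteq> 0\<close> by (metis positive_definite_def)
qed

lemma positive_definite_submatrix_invertible:
  fixes R :: "'k::finite \<Rightarrow> 'n::finite"
  assumes "positive_definite A" and "inj R"
  shows "invertible (submatrix A R R)"
  using assms by (intro positive_definite_invertible positive_definite_submatrix)

lemma block_identity_kernel_iff: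
  fixes A :: "real^'k^'k"
  assumes "A ** X + Y ** Z = 0" and "inj ((*v) A)"
  shows "X *v x = 0 \<longleftrightarrow> Y *v (Z *v x) = 0"
proof -
  have "A *v (X *v x) = - (Y *v (Z *v x))"
    using arg_cong[OF assms(1), of "\<lambda>M. M *v x"]
    by (simp add: matrix_vector_mul_assoc matrix_vector_mult_add_rdistrib eq_neg_iff_add_eq_0)
  moreover have "A *v (X *v x) = 0 \<longleftrightarrow> X *v x = 0"
    using assms(2) by (auto simp: vec.inj_iff_eq_0)
  ultimately show ?thesis
    by simp
qed

lemma kernel_subset_comp_surj_iff:
  assumes "surj T"
  shows "{x. f (T x) = 0} \<subseteq> {x. g (T x) = 0} \<longleftrightarrow> {y. f y = 0} \<subseteq> {y. g y = 0}"
proof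
  assume ker: "{x. f (T x) = 0} \<subseteq> {x. g (T x) = 0}"
  show "{y. f y = 0} \<subseteq> {y. g y = 0}"
  proof
    fix y
    assume "y \<in> {y. f y = 0}"
    moreover obtain x where "y = T x"
      using assms by (metis surjD)
    ultimately show "y \<in> {y. g y = 0}"
      using ker by auto
  qed
qed auto

lemma linear_eq_imp_eq_iff_kernel_subset:
  assumes "linear f" and "linear g"
  shows "(\<forall>x y. f x = f y \<longrightarrow> g x = g y) \<longleftrightarrow> {x. f x = 0} \<subseteq> {x. g x = 0}"
proof
  assume fibres: "\<forall>x y. f x = f y \<longrightarrow> g x = g y"
  show "{x. f x = 0} \<subseteq> {x. g x = 0}"
  proof
    fix x
    assume "x \<in> {x. f x = 0}"
    then have "f x = f 0"
      using assms(1) by (simp add: linear_0)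
    then have "g x = g 0"
      using fibres by blast
    then show "x \<in> {x. g x = 0}"
      using assms(2) by (simp add: linear_0)
  qed
next
  assume ker: "{x. f x = 0} \<subseteq> {x. g x = 0}"
  show "\<forall>x y. f x = f y \<longrightarrow> g x = g y"
  proof (intro allI impI)
    fix x y
    assume "f x = f y"
    then have "f (x - y) = 0"
      using assms(1) by (simp add: linear_diff)
    then have "g (x - y) = 0"
      using ker by blast
    then show "g x = g y"
      using assms(2) by (simp add: linear_diff)
  qed
qed

lemma factors_through_iff_eq_imp_eq:
  "(\<exists>\<sigma>. \<sigma> ` range f \<subseteq> range g \<and> (\<forall>x. \<sigma> (f x) = g x)) \<longleftrightarrow> (\<forall>x y. f x = f y \<longrightarrow> g x = g y)"
proof
  assume fibres: "\<forall>x y. f x = f y \<longrightarrow> g x = g y"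
  define \<sigma> where "\<sigma> y = g (SOME x. f x = y)" for y
  have "\<sigma> (f x) = g x" for x
    unfolding \<sigma>_def using fibres someI[of "\<lambda>x'. f x' = f x" x] by blast
  then show "\<exists>\<sigma>. \<sigma> ` range f \<subseteq> range g \<and> (\<forall>x. \<sigma> (f x) = g x)"
    by blast
next
  assume "\<exists>\<sigma>. \<sigma> ` range f \<subseteq> range g \<and> (\<forall>x. \<sigma> (f x) = g x)"
  then show "\<forall>x y. f x = f y \<longrightarrow> g x = g y"
    by metis
qed

lemma kernel_blk_eb_matrix_inv:
  assumes "sym_pos_def_mat P" and "blk_em P = 0"
  shows "blk_eb (matrix_inv P) *v x = 0 \<longleftrightarrow> blk_eb P *v (blk_bb (matrix_inv P) *v x) = 0"
proof (rule block_identity_kernel_iff)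
  have pd: "positive_definite P"
    using assms(1) by (rule sym_pos_def_mat_positive_definite)
  have "submatrix (P ** matrix_inv P) Inl (Inr \<circ> Inl) = 0"
    unfolding matrix_inv_inverse(1)[OF positive_definite_invertible[OF pd]]
    by (rule submatrix_mat_1_disjoint) auto
  then show "submatrix P Inl Inl ** blk_eb (matrix_inv P) + blk_eb P ** blk_bb (matrix_inv P) = 0"
    using assms(2) by (simp add: submatrix_matrix_mult_blocks blk_submatrix)
  show "inj ((*v) (submatrix P Inl Inl))"
    using pd by (intro inj_matrix_vector_mult positive_definite_submatrix_invertible) simp_all
qed

lemma kernel_blk_mb_matrix_inv:
  assumes "sym_pos_def_mat P" and "blk_me P = 0"
  shows "blk_mb (matrix_inv P) *v x = 0 \<longleftrightarrow> blk_mb P *v (blk_bb (matrix_inv P) *v x) = 0"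
proof (rule block_identity_kernel_iff)
  have pd: "positive_definite P"
    using assms(1) by (rule sym_pos_def_mat_positive_definite)
  have "submatrix (P ** matrix_inv P) (Inr \<circ> Inr) (Inr \<circ> Inl) = 0"
    unfolding matrix_inv_inverse(1)[OF positive_definite_invertible[OF pd]]
    by (rule submatrix_mat_1_disjoint) auto
  then show "submatrix P (Inr \<circ> Inr) (Inr \<circ> Inr) ** blk_mb (matrix_inv P)
      + blk_mb P ** blk_bb (matrix_inv P) = 0"
    using assms(2) by (simp add: submatrix_matrix_mult_blocks blk_submatrix add.commute)
  show "inj ((*v) (submatrix P (Inr \<circ> Inr) (Inr \<circ> Inr)))"
    using pd by (intro inj_matrix_vector_mult positive_definite_submatrix_invertible)
      (simp_all add: inj_def)
qed

lemma invertible_blk_bb_matrix_inv: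
  assumes "sym_pos_def_mat P"
  shows "invertible (blk_bb (matrix_inv P))"
  unfolding blk_submatrix
  using assms by (intro positive_definite_submatrix_invertible positive_definite_matrix_inv
      sym_pos_def_mat_positive_definite) (simp_all add: inj_def)

theorem lemma2p1:
  fixes P :: "real^('e::finite + 'b::finite + 'm::finite)^('e + 'b + 'm)"
  assumes spd: "sym_pos_def_mat P"
    and blanket_em: "blk_em P = 0"
    and blanket_me: "blk_me P = 0"
  shows "((\<exists>\<sigma> :: real^'m \<Rightarrow> real^'e.
              \<sigma> ` range (mu_map P) \<subseteq> range (eta_map P) \<and>
              (\<forall>b. \<sigma> (mu_map P b) = eta_map P b))
          \<longleftrightarrow> (\<forall>b1 b2. mu_map P b1 = mu_map P b2 \<longrightarrow> eta_map P b1 = eta_map P b2))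
       \<and> ((\<forall>b1 b2. mu_map P b1 = mu_map P b2 \<longrightarrow> eta_map P b1 = eta_map P b2)
          \<longleftrightarrow> {x. blk_mb (matrix_inv P) *v x = 0} \<subseteq> {x. blk_eb (matrix_inv P) *v x = 0})
       \<and> ({x. blk_mb (matrix_inv P) *v x = 0} \<subseteq> {x. blk_eb (matrix_inv P) *v x = 0}
          \<longleftrightarrow> {x. blk_mb P *v x = 0} \<subseteq> {x. blk_eb P *v x = 0})"
proof -
  define S\<^sub>b where "S\<^sub>b = blk_bb (matrix_inv P)"
  have inv: "invertible S\<^sub>b"
    using invertible_blk_bb_matrix_inv[OF spd] by (simp add: S\<^sub>b_def)
  have surj: "surj ((*v) S\<^sub>b)" "surj ((*v) (matrix_inv S\<^sub>b))"
    using inv invertible_matrix_inv[OF inv] by (simp_all add: invertible_eq_bij bij_is_surj)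
  have mu: "mu_map P b = blk_mb (matrix_inv P) *v (matrix_inv S\<^sub>b *v b)"
    and eta: "eta_map P b = blk_eb (matrix_inv P) *v (matrix_inv S\<^sub>b *v b)" for b
    by (simp_all add: mu_map_def eta_map_def S\<^sub>b_def matrix_vector_mul_assoc)
  have "(\<forall>b1 b2. mu_map P b1 = mu_map P b2 \<longrightarrow> eta_map P b1 = eta_map P b2)
      \<longleftrightarrow> {b. mu_map P b = 0} \<subseteq> {b. eta_map P b = 0}"
    by (rule linear_eq_imp_eq_iff_kernel_subset)
      (simp_all add: mu_map_def[abs_def] eta_map_def[abs_def])
  also have "\<dots> \<longleftrightarrow> {x. blk_mb (matrix_inv P) *v x = 0} \<subseteq> {x. blk_eb (matrix_inv P) *v x = 0}"
    unfolding mu eta by (rule kernel_subset_comp_surj_iff[OF surj(2)])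
  finally have ii_iii: "(\<forall>b1 b2. mu_map P b1 = mu_map P b2 \<longrightarrow> eta_map P b1 = eta_map P b2)
      \<longleftrightarrow> {x. blk_mb (matrix_inv P) *v x = 0} \<subseteq> {x. blk_eb (matrix_inv P) *v x = 0}" .
  have "{x. blk_mb (matrix_inv P) *v x = 0} \<subseteq> {x. blk_eb (matrix_inv P) *v x = 0}
      \<longleftrightarrow> {x. blk_mb P *v (S\<^sub>b *v x) = 0} \<subseteq> {x. blk_eb P *v (S\<^sub>b *v x) = 0}"
    by (simp add: kernel_blk_mb_matrix_inv[OF spd blanket_me]
        kernel_blk_eb_matrix_inv[OF spd blanket_em] S\<^sub>b_def)
  also have "\<dots> \<longleftrightarrow> {x. blk_mb P *v x = 0} \<subseteq> {x. blk_eb P *v x = 0}"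
    by (rule kernel_subset_comp_surj_iff[OF surj(1)])
  finally have iii_iv: "{x. blk_mb (matrix_inv P) *v x = 0} \<subseteq> {x. blk_eb (matrix_inv P) *v x = 0}
      \<longleftrightarrow> {x. blk_mb P *v x = 0} \<subseteq> {x. blk_eb P *v x = 0}" .
  show ?thesis
    using factors_through_iff_eq_imp_eq[of "mu_map P" "eta_map P"] ii_iii iii_iv by blast
qed

end
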